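(* Let $q$ be a prime power, $r\ge 1$ an integer, and $\mathcal{S}$ a $q^r$-divisible spanning set of $q^{r+1}$ points in $\mathrm{PG}(v-1,q)$. Then the number of hyperplanes $H$ with $|\mathcal{S}\cap H|=q^r$ is at least $\frac{q^v-1}{q-1}-\left(q^{v-r-1}-q+1\right)$.
   Context: $\mathrm{PG}(v-1,q)$ is the projective space of $\mathbb{F}_q^v$; points are $1$-dimensional and hyperplanes $(v-1)$-dimensional subspaces of $\mathbb{F}_q^v$. A set $\mathcal{S}$ of points is spanning if its points span $\mathbb{F}_q^v$, and it is $q^r$-divisible if $|\mathcal{S}\cap H|\equiv|\mathcal{S}|\pmod{q^r}$ for every hyperplane $H$. *)

theory Defs
  imports Complex_Main
begin

text \<open>Coordinates: F_q^v is modelled as functions 'n => 'a, where 'a is a finite field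
  (so q = CARD('a) is a prime power) and v = CARD('n).\<close>

definition lin_subspace :: "('n \<Rightarrow> 'a::field) set \<Rightarrow> bool" where
  "lin_subspace W \<longleftrightarrow> (\<lambda>i. 0) \<in> W \<and> (\<forall>x\<in>W. \<forall>y\<in>W. (\<lambda>i. x i + y i) \<in> W)
     \<and> (\<forall>c. \<forall>x\<in>W. (\<lambda>i. c * x i) \<in> W)"

definition lin_span :: "('n \<Rightarrow> 'a::field) set \<Rightarrow> ('n \<Rightarrow> 'a) set" where
  "lin_span X = \<Inter>{W. lin_subspace W \<and> X \<subseteq> W}"

definition proj_points :: "('n::finite \<Rightarrow> 'a::{field,finite}) set set" where
  "proj_points = {{(\<lambda>i. c * x i) | c. True} | x. x \<noteq> (\<lambda>i. 0)}"

definition proj_hyperplanes :: "('n::finite \<Rightarrow> 'a::{field,finite}) set set" where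
  "proj_hyperplanes = {{x. (\<Sum>i\<in>UNIV. a i * x i) = 0} | a. a \<noteq> (\<lambda>i. 0)}"

definition spanning_set :: "('n::finite \<Rightarrow> 'a::{field,finite}) set set \<Rightarrow> bool" where
  "spanning_set S \<longleftrightarrow> lin_span (\<Union>S) = UNIV"

definition pts_in :: "('n::finite \<Rightarrow> 'a::{field,finite}) set set \<Rightarrow> ('n \<Rightarrow> 'a) set \<Rightarrow> nat" where
  "pts_in S H = card {P\<in>S. P \<subseteq> H}"

definition divisible_set :: "nat \<Rightarrow> ('n::finite \<Rightarrow> 'a::{field,finite}) set set \<Rightarrow> bool" where
  "divisible_set m S \<longleftrightarrow> (\<forall>H\<in>proj_hyperplanes. pts_in S H mod m = card S mod m)"

end

theory Submission
  imports Defs "HOL-Library.Cardinality"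
begin

text \<open>A hyperplane is the kernel of \<open>q - 1\<close> nonzero linear forms \<open>a\<close>; let \<open>m(a)\<close> be the number
  of points of \<open>S\<close> in the kernel of \<open>a\<close>, so \<open>m(0) = |S|\<close>. Double counting over all forms gives
  the first two moments of \<open>m\<close>, because one point imposes one linear condition on \<open>a\<close> and two
  distinct points impose two independent ones. For \<open>|S| = q^(r+1)\<close> this yields
  \<open>\<Sum>a\<noteq>0. (m(a) - q^r)^2 = q^r (q - 1) (q^(v-1) - q^r (q - 1))\<close>. By divisibility every
  \<open>m(a)\<close> is a multiple of \<open>q^r\<close>, so each form with \<open>m(a) \<noteq> q^r\<close> contributes at least
  \<open>q^(2r)\<close> to this sum, which bounds the number of such forms.\<close>

definition dot :: "('n::finite \<Rightarrow> 'a::field) \<Rightarrow> ('n \<Rightarrow> 'a) \<Rightarrow> 'a" where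
  "dot a x = (\<Sum>i\<in>UNIV. a i * x i)"

lemma dot_comm: "dot a x = dot x a"
  by (simp add: dot_def mult.commute)

lemma dot_add_scaled_left: "dot (\<lambda>i. a i + c * w i) x = dot a x + c * dot w x"
  by (simp add: dot_def algebra_simps sum.distrib sum_distrib_left)

lemma dot_scaled_left: "dot (\<lambda>i. c * a i) x = c * dot a x"
  by (simp add: dot_def sum_distrib_left mult.assoc)

lemma dot_scaled_right: "dot a (\<lambda>i. c * x i) = c * dot a x"
  by (simp add: dot_def sum_distrib_left algebra_simps)

lemma dot_unit_left: "dot (\<lambda>k. if k = j then u else 0) x = u * x j"
proof -
  have "dot (\<lambda>k. if k = j then u else 0) x = (\<Sum>k\<in>UNIV. if k = j then u * x k else 0)"
    unfolding dot_def by (rule sum.cong) auto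
  then show ?thesis by simp
qed

lemma card_fun_UNIV: "CARD('n::finite \<Rightarrow> 'a::finite) = CARD('a) ^ CARD('n)"
  by (simp add: card_fun)

lemma CARD_field_ge_2: "CARD('a::{field,finite}) \<ge> 2"
proof -
  have "card {0::'a, 1} \<le> CARD('a)" by (rule card_mono) auto
  then show ?thesis by simp
qed

text \<open>The map \<open>a \<mapsto> (g a, a - g a \<cdot> w)\<close> is a bijection \<open>W \<rightarrow> 'a \<times> {a \<in> W. g a = 0}\<close>.\<close>
lemma card_eq_CARD_mult_card_zero_level:
  fixes W :: "('n \<Rightarrow> 'a::{field,finite}) set"
  assumes closed: "\<And>a c. a \<in> W \<Longrightarrow> (\<lambda>i. a i + c * w i) \<in> W"
    and shift: "\<And>a c. a \<in> W \<Longrightarrow> g (\<lambda>i. a i + c * w i) = g a + c"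
  shows "card W = CARD('a) * card {a\<in>W. g a = 0}"
proof -
  let ?f = "\<lambda>a. (g a, \<lambda>i. a i + (- g a) * w i)"
  let ?h = "\<lambda>(c, b). (\<lambda>i. b i + c * w i)"
  have "bij_betw ?f W (UNIV \<times> {a\<in>W. g a = 0})"
  proof (rule bij_betw_byWitness[where f' = ?h])
    show "\<forall>a\<in>W. ?h (?f a) = a"
      by auto
    show "\<forall>b\<in>UNIV \<times> {a\<in>W. g a = 0}. ?f (?h b) = b"
      using shift by (auto simp: algebra_simps)
    show "?f ` W \<subseteq> UNIV \<times> {a\<in>W. g a = 0}"
    proof
      fix z assume "z \<in> ?f ` W"
      then obtain a where "a \<in> W" "z = ?f a" by blast
      then show "z \<in> UNIV \<times> {a\<in>W. g a = 0}"
        using closed[of a "- g a"] shift[of a "- g a"] by simp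
    qed
    show "?h ` (UNIV \<times> {a\<in>W. g a = 0}) \<subseteq> W"
      using closed by auto
  qed
  then show ?thesis
    by (simp add: bij_betw_same_card card_cartesian_product)
qed

lemma collinear_if_annihilators_subset:
  fixes x y :: "'n::finite \<Rightarrow> 'a::field"
  assumes "x \<noteq> (\<lambda>i. 0)" and annih: "\<And>a. dot a x = 0 \<Longrightarrow> dot a y = 0"
  shows "\<exists>c. y = (\<lambda>i. c * x i)"
proof -
  obtain i where xi: "x i \<noteq> 0" using assms(1) by auto
  have "y j = (y i / x i) * x j" for j
  proof -
    define a where "a = (\<lambda>k. (if k = j then x i else 0) + (- x j) * (if k = i then 1 else 0))"
    have "dot a x = 0"
      by (simp only: a_def dot_add_scaled_left dot_unit_left) simp
    then have "dot a y = 0" by (rule annih)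
    then have "x i * y j = x j * y i"
      by (simp only: a_def dot_add_scaled_left dot_unit_left) simp
    with xi show ?thesis by (simp add: field_simps)
  qed
  then show ?thesis by blast
qed

lemma card_annihilator:
  fixes x :: "'n::finite \<Rightarrow> 'a::{field,finite}"
  assumes "x \<noteq> (\<lambda>i. 0)"
  shows "CARD('a) * card {a. dot a x = 0} = CARD('a) ^ CARD('n)"
proof -
  obtain i where xi: "x i \<noteq> 0" using assms by auto
  let ?w = "\<lambda>k. if k = i then 1 / x i else 0"
  have "CARD('n \<Rightarrow> 'a) = CARD('a) * card {a\<in>UNIV. dot a x = 0}"
    by (rule card_eq_CARD_mult_card_zero_level[where w = ?w])
      (use xi in \<open>auto simp: dot_add_scaled_left dot_unit_left\<close>)
  then show ?thesis by (simp add: card_fun_UNIV)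
qed

lemma card_annihilator_pair:
  fixes x y :: "'n::finite \<Rightarrow> 'a::{field,finite}"
  assumes "x \<noteq> (\<lambda>i. 0)" and "\<nexists>c. y = (\<lambda>i. c * x i)"
  shows "CARD('a) * card {a. dot a x = 0 \<and> dot a y = 0} = card {a. dot a x = 0}"
proof -
  obtain b where b: "dot b x = 0" "dot b y \<noteq> 0"
    using collinear_if_annihilators_subset[OF assms(1)] assms(2) by blast
  define c where "c = 1 / dot b y"
  with b have "c * dot b y = 1" by simp
  then have "card {a. dot a x = 0} = CARD('a) * card {a\<in>{a. dot a x = 0}. dot a y = 0}"
    by (intro card_eq_CARD_mult_card_zero_level[where w = "\<lambda>k. c * b k"])
      (use b in \<open>auto simp: dot_add_scaled_left dot_scaled_left\<close>)
  then show ?thesis by (simp add: conj_commute)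
qed

lemma dot_kernel_eq_iff:
  fixes a a0 :: "'n::finite \<Rightarrow> 'a::{field,finite}"
  assumes "a0 \<noteq> (\<lambda>i. 0)" "a \<noteq> (\<lambda>i. 0)"
  shows "{x. dot a x = 0} = {x. dot a0 x = 0} \<longleftrightarrow> (\<exists>c. c \<noteq> 0 \<and> a = (\<lambda>i. c * a0 i))"
proof
  assume "{x. dot a x = 0} = {x. dot a0 x = 0}"
  then have "\<And>b. dot b a0 = 0 \<Longrightarrow> dot b a = 0"
    by (auto simp: dot_comm[of _ a0] dot_comm[of _ a] set_eq_iff)
  then obtain c where "a = (\<lambda>i. c * a0 i)"
    using collinear_if_annihilators_subset[OF assms(1)] by blast
  moreover from this have "c \<noteq> 0" using assms(2) by auto
  ultimately show "\<exists>c. c \<noteq> 0 \<and> a = (\<lambda>i. c * a0 i)" by blast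
next
  assume "\<exists>c. c \<noteq> 0 \<and> a = (\<lambda>i. c * a0 i)"
  then show "{x. dot a x = 0} = {x. dot a0 x = 0}" by (auto simp: dot_scaled_left)
qed

lemma card_normals_of_kernel:
  fixes a0 :: "'n::finite \<Rightarrow> 'a::{field,finite}"
  assumes "a0 \<noteq> (\<lambda>i. 0)"
  shows "card {a. a \<noteq> (\<lambda>i. 0) \<and> {x. dot a x = 0} = {x. dot a0 x = 0}} = CARD('a) - 1"
proof -
  have "{a. a \<noteq> (\<lambda>i. 0) \<and> {x. dot a x = 0} = {x. dot a0 x = 0}} = (\<lambda>c i. c * a0 i) ` (UNIV - {0})"
  proof (intro set_eqI iffI)
    fix a assume "a \<in> {a. a \<noteq> (\<lambda>i. 0) \<and> {x. dot a x = 0} = {x. dot a0 x = 0}}"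
    then show "a \<in> (\<lambda>c i. c * a0 i) ` (UNIV - {0})"
      using dot_kernel_eq_iff[OF assms, of a] by auto
  next
    fix a assume "a \<in> (\<lambda>c i. c * a0 i) ` (UNIV - {0})"
    then obtain c where c: "c \<noteq> 0" "a = (\<lambda>i. c * a0 i)" by blast
    with assms have "a \<noteq> (\<lambda>i. 0)" by (auto simp: fun_eq_iff)
    with c show "a \<in> {a. a \<noteq> (\<lambda>i. 0) \<and> {x. dot a x = 0} = {x. dot a0 x = 0}}"
      using dot_kernel_eq_iff[OF assms] by blast
  qed
  moreover have "inj (\<lambda>c i. c * a0 i)"
  proof
    fix c d assume "(\<lambda>i. c * a0 i) = (\<lambda>i. d * a0 i)"
    moreover obtain i where "a0 i \<noteq> 0" using assms by auto
    ultimately show "c = d" by (metis mult_right_cancel)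
  qed
  ultimately show ?thesis
    by (simp add: card_image inj_on_subset card_Diff_subset)
qed

lemma card_normals_eq_mult_card_hyperplanes:
  fixes f :: "('n::finite \<Rightarrow> 'a::{field,finite}) set \<Rightarrow> bool"
  shows "card {a::'n \<Rightarrow> 'a. a \<noteq> (\<lambda>i. 0) \<and> f {x. dot a x = 0}}
       = (CARD('a) - 1) * card {H \<in> proj_hyperplanes. f H}"
proof -
  define ker where "ker = (\<lambda>a::'n \<Rightarrow> 'a. {x. dot a x = 0})"
  define A where "A = {a. a \<noteq> (\<lambda>i. 0) \<and> f (ker a)}"
  have image: "ker ` A = {H \<in> proj_hyperplanes. f H}"
    unfolding proj_hyperplanes_def A_def ker_def dot_def by auto
  have fibre: "card {a\<in>A. ker a = H} = CARD('a) - 1" if "H \<in> ker ` A" for H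
  proof -
    obtain a0 where a0: "a0 \<in> A" "H = ker a0" using \<open>H \<in> ker ` A\<close> by blast
    then have "{a\<in>A. ker a = H} = {a. a \<noteq> (\<lambda>i. 0) \<and> {x. dot a x = 0} = {x. dot a0 x = 0}}"
      by (auto simp: A_def ker_def)
    with a0 show ?thesis by (simp add: card_normals_of_kernel A_def)
  qed
  have "card A = (\<Sum>H\<in>ker ` A. card {a\<in>A. ker a = H})"
    using sum.image_gen[of A "\<lambda>_. 1::nat" ker] by simp
  also have "\<dots> = (CARD('a) - 1) * card (ker ` A)"
    using fibre by simp
  finally show ?thesis unfolding image[symmetric] A_def ker_def .
qed

lemma card_hyperplanes_by_complement:
  fixes f :: "('n::finite \<Rightarrow> 'a::{field,finite}) set \<Rightarrow> bool"
  shows "(real CARD('a) - 1) * real (card {H \<in> proj_hyperplanes. f H})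
       = real CARD('a) ^ CARD('n) - 1 - real (card {a::'n \<Rightarrow> 'a. a \<noteq> (\<lambda>i. 0) \<and> \<not> f {x. dot a x = 0}})"
proof -
  let ?good = "{a::'n \<Rightarrow> 'a. a \<noteq> (\<lambda>i. 0) \<and> f {x. dot a x = 0}}"
  let ?bad = "{a::'n \<Rightarrow> 'a. a \<noteq> (\<lambda>i. 0) \<and> \<not> f {x. dot a x = 0}}"
  have "?good \<union> ?bad = UNIV - {\<lambda>i. 0}" by auto
  then have "card ?good + card ?bad = CARD('a) ^ CARD('n) - 1"
    by (subst card_Un_disjoint[symmetric]) (auto simp: card_fun_UNIV card_Diff_subset)
  then have "real ((CARD('a) - 1) * card {H \<in> proj_hyperplanes. f H} + card ?bad)
      = real (CARD('a) ^ CARD('n) - 1)"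
    by (simp only: card_normals_eq_mult_card_hyperplanes)
  moreover have "1 \<le> CARD('a)" "1 \<le> CARD('a) ^ CARD('n)"
    using CARD_field_ge_2[where 'a='a] by auto
  ultimately show ?thesis by (simp add: of_nat_diff)
qed

definition point_rep :: "('n::finite \<Rightarrow> 'a::{field,finite}) set \<Rightarrow> 'n \<Rightarrow> 'a" where
  "point_rep P = (SOME x. x \<noteq> (\<lambda>i. 0) \<and> P = {(\<lambda>i. c * x i) | c. True})"

lemma point_rep:
  assumes "P \<in> proj_points"
  shows "point_rep P \<noteq> (\<lambda>i. 0)" and "P = {(\<lambda>i. c * point_rep P i) | c. True}"
proof -
  have "\<exists>x. x \<noteq> (\<lambda>i. 0) \<and> P = {(\<lambda>i. c * x i) | c. True}"
    using assms by (auto simp: proj_points_def)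
  then have "point_rep P \<noteq> (\<lambda>i. 0) \<and> P = {(\<lambda>i. c * point_rep P i) | c. True}"
    unfolding point_rep_def by (rule someI_ex)
  then show "point_rep P \<noteq> (\<lambda>i. 0)" and "P = {(\<lambda>i. c * point_rep P i) | c. True}"
    by blast+
qed

lemma point_subset_kernel_iff:
  assumes "P \<in> proj_points"
  shows "P \<subseteq> {x. dot a x = 0} \<longleftrightarrow> dot a (point_rep P) = 0"
proof -
  have P: "P = {(\<lambda>i. c * point_rep P i) | c. True}" by (rule point_rep(2)[OF assms])
  have "point_rep P \<in> P" by (subst P) (auto intro: exI[of _ 1])
  moreover have "P \<subseteq> {x. dot a x = 0}" if "dot a (point_rep P) = 0"
    using that by (subst P) (auto simp: dot_scaled_right)
  ultimately show ?thesis by blast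
qed

lemma point_rep_not_collinear:
  assumes "P \<in> proj_points" "R \<in> proj_points" "P \<noteq> R"
  shows "\<nexists>c. point_rep R = (\<lambda>i. c * point_rep P i)"
proof
  assume "\<exists>c. point_rep R = (\<lambda>i. c * point_rep P i)"
  then obtain c where c: "point_rep R = (\<lambda>i. c * point_rep P i)" by blast
  with point_rep(1)[OF assms(2)] have "c \<noteq> 0" by auto
  have "R = P"
  proof (intro set_eqI iffI)
    fix z assume "z \<in> R"
    then obtain d where "z = (\<lambda>i. d * point_rep R i)" using point_rep(2)[OF assms(2)] by blast
    then have "z = (\<lambda>i. (d * c) * point_rep P i)" using c by (simp add: mult.assoc)
    then show "z \<in> P" using point_rep(2)[OF assms(1)] by blast
  next
    fix z assume "z \<in> P"
    then obtain d where "z = (\<lambda>i. d * point_rep P i)" using point_rep(2)[OF assms(1)] by blast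
    then have "z = (\<lambda>i. (d / c) * point_rep R i)" using c \<open>c \<noteq> 0\<close> by simp
    then show "z \<in> R" using point_rep(2)[OF assms(2)] by blast
  qed
  with assms(3) show False by simp
qed

lemma card_common_annihilator_points:
  fixes P R :: "('n::finite \<Rightarrow> 'a::{field,finite}) set"
  assumes "P \<in> proj_points" "R \<in> proj_points"
  shows "CARD('a)^2 * card {a. dot a (point_rep P) = 0 \<and> dot a (point_rep R) = 0}
       = (if P = R then CARD('a) else 1) * CARD('a) ^ CARD('n)"
proof (cases "P = R")
  case True
  then show ?thesis
    using card_annihilator[OF point_rep(1)[OF assms(1)]] by (simp add: power2_eq_square)
next
  case False
  then show ?thesis
    using card_annihilator_pair[OF point_rep(1)[OF assms(1)] point_rep_not_collinear[OF assms False]]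
      card_annihilator[OF point_rep(1)[OF assms(1)]]
    by (simp add: power2_eq_square mult.assoc)
qed

lemma pts_in_kernel:
  assumes "S \<subseteq> proj_points"
  shows "pts_in S {x. dot a x = 0} = (\<Sum>P\<in>S. if dot a (point_rep P) = 0 then 1 else 0)"
proof -
  have "{P\<in>S. P \<subseteq> {x. dot a x = 0}} = {P\<in>S. dot a (point_rep P) = 0}"
    using point_subset_kernel_iff assms by blast
  then show ?thesis
    by (simp add: pts_in_def sum.inter_filter[symmetric])
qed

lemma sum_pts_in_kernels:
  fixes S :: "('n::finite \<Rightarrow> 'a::{field,finite}) set set"
  assumes "S \<subseteq> proj_points"
  shows "CARD('a) * (\<Sum>a\<in>UNIV. pts_in S {x. dot a x = 0}) = card S * CARD('a) ^ CARD('n)"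
proof -
  have "CARD('a) * (\<Sum>a\<in>UNIV. pts_in S {x. dot a x = 0})
      = (\<Sum>P\<in>S. CARD('a) * (\<Sum>a\<in>UNIV. if dot a (point_rep P) = 0 then 1 else 0))"
    by (simp add: pts_in_kernel[OF assms] sum_distrib_left sum.swap[of _ UNIV])
  also have "\<dots> = (\<Sum>P\<in>S. CARD('a) ^ CARD('n))"
    using assms card_annihilator[OF point_rep(1)]
    by (intro sum.cong) (auto simp: sum.inter_filter[symmetric])
  finally show ?thesis by simp
qed

lemma sum_sq_pts_in_kernels:
  fixes S :: "('n::finite \<Rightarrow> 'a::{field,finite}) set set"
  assumes "S \<subseteq> proj_points"
  shows "CARD('a)^2 * (\<Sum>a\<in>UNIV. pts_in S {x. dot a x = 0} ^ 2)
       = card S * (card S + CARD('a) - 1) * CARD('a) ^ CARD('n)"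
proof -
  let ?ind = "\<lambda>a P. if dot a (point_rep P) = 0 then 1 else 0 :: nat"
  have "(\<Sum>a\<in>UNIV. pts_in S {x. dot a x = 0} ^ 2) = (\<Sum>a\<in>UNIV. \<Sum>P\<in>S. \<Sum>R\<in>S. ?ind a P * ?ind a R)"
    by (simp add: pts_in_kernel[OF assms] power2_eq_square sum_product)
  also have "\<dots> = (\<Sum>P\<in>S. \<Sum>a\<in>UNIV. \<Sum>R\<in>S. ?ind a P * ?ind a R)"
    by (rule sum.swap)
  also have "\<dots> = (\<Sum>P\<in>S. \<Sum>R\<in>S. \<Sum>a\<in>UNIV. ?ind a P * ?ind a R)"
    by (intro sum.cong refl sum.swap)
  finally have "CARD('a)^2 * (\<Sum>a\<in>UNIV. pts_in S {x. dot a x = 0} ^ 2)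
      = (\<Sum>P\<in>S. \<Sum>R\<in>S. CARD('a)^2 * (\<Sum>a\<in>UNIV. ?ind a P * ?ind a R))"
    by (simp add: sum_distrib_left)
  also have "\<dots> = (\<Sum>P\<in>S. \<Sum>R\<in>S. (if P = R then CARD('a) else 1) * CARD('a) ^ CARD('n))"
  proof (intro sum.cong refl)
    fix P R assume "P \<in> S" "R \<in> S"
    with assms have PR: "P \<in> proj_points" "R \<in> proj_points" by auto
    have "(\<Sum>a\<in>UNIV. ?ind a P * ?ind a R)
        = (\<Sum>a\<in>UNIV. if dot a (point_rep P) = 0 \<and> dot a (point_rep R) = 0 then 1 else 0)"
      by (intro sum.cong) auto
    also have "\<dots> = card {a. dot a (point_rep P) = 0 \<and> dot a (point_rep R) = 0}"
      by (simp add: sum.inter_filter[symmetric])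
    finally show "CARD('a)^2 * (\<Sum>a\<in>UNIV. ?ind a P * ?ind a R)
        = (if P = R then CARD('a) else 1) * CARD('a) ^ CARD('n)"
      using card_common_annihilator_points[OF PR] by (simp only:)
  qed
  also have "\<dots> = (\<Sum>P\<in>S. (card S + CARD('a) - 1) * CARD('a) ^ CARD('n))"
  proof (intro sum.cong refl)
    fix P assume "P \<in> S"
    have "(\<Sum>R\<in>S - {P}. if P = R then CARD('a) else 1) = (\<Sum>R\<in>S - {P}. 1)"
      by (intro sum.cong) auto
    with \<open>P \<in> S\<close> have "(\<Sum>R\<in>S. if P = R then CARD('a) else 1) = CARD('a) + (card S - 1)"
      by (simp add: sum.remove)
    also have "\<dots> = card S + CARD('a) - 1"
      using \<open>P \<in> S\<close> card_gt_0_iff[of S] by fastforce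
    finally show "(\<Sum>R\<in>S. (if P = R then CARD('a) else 1) * CARD('a) ^ CARD('n))
        = (card S + CARD('a) - 1) * CARD('a) ^ CARD('n)"
      by (simp add: sum_distrib_right[symmetric])
  qed
  finally show ?thesis by simp
qed

lemma sum_sq_deviation_nonzero_forms:
  fixes S :: "('n::finite \<Rightarrow> 'a::{field,finite}) set set" and k :: nat
  assumes "S \<subseteq> proj_points" and card_S: "card S = k * CARD('a)"
  shows "(\<Sum>a\<in>UNIV - {\<lambda>i. 0}. (real (pts_in S {x. dot a x = 0}) - k)^2)
       = real k * (real CARD('a) - 1) * (real CARD('a) ^ CARD('n) / real CARD('a) - real k * (real CARD('a) - 1))"
proof -
  define Q where "Q = real CARD('a)"
  define V where "V = Q ^ CARD('n)"
  define m where "m a = real (pts_in S {x. dot a x = 0})" for a :: "'n \<Rightarrow> 'a"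
  have Q: "Q \<ge> 2" using CARD_field_ge_2 by (simp add: Q_def)
  have m0: "m (\<lambda>i. 0) = k * Q"
    by (simp add: m_def dot_def pts_in_def card_S Q_def)
  have "Q * (\<Sum>a\<in>UNIV. m a) = k * Q * V"
    using arg_cong[OF sum_pts_in_kernels[OF assms(1)], of real]
    by (simp add: m_def card_S Q_def V_def)
  then have M1: "(\<Sum>a\<in>UNIV. m a) = k * V" using Q by simp
  have "Q^2 * (\<Sum>a\<in>UNIV. (m a)^2) = k * Q * (k * Q + Q - 1) * V"
    using arg_cong[OF sum_sq_pts_in_kernels[OF assms(1)], of real] CARD_field_ge_2[where 'a='a]
    by (simp add: m_def card_S Q_def V_def of_nat_diff)
  then have "Q * (\<Sum>a\<in>UNIV. (m a)^2) = k * (k * Q + Q - 1) * V"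
    using Q by (simp add: power2_eq_square mult.assoc)
  then have M2: "(\<Sum>a\<in>UNIV. (m a)^2) = k * (k * Q + Q - 1) * V / Q"
    using Q by (simp add: eq_divide_eq mult.commute)
  have M1': "(\<Sum>a\<in>UNIV - {\<lambda>i. 0}. m a) = k * V - k * Q"
    by (simp add: sum_diff1 M1 m0)
  have M2': "(\<Sum>a\<in>UNIV - {\<lambda>i. 0}. (m a)^2) = k * (k * Q + Q - 1) * V / Q - (k * Q)^2"
    by (simp add: sum_diff1 M2 m0)
  have "(\<Sum>a\<in>UNIV - {\<lambda>i. 0}. (m a - k)^2)
      = (\<Sum>a\<in>UNIV - {\<lambda>i. 0}. (m a)^2) - 2 * k * (\<Sum>a\<in>UNIV - {\<lambda>i. 0}. m a) + k^2 * (V - 1)"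
    by (simp add: power2_diff sum.distrib sum_subtractf sum_distrib_left mult_ac V_def Q_def
        card_fun_UNIV of_nat_diff)
  also have "\<dots> = k * (Q - 1) * (V / Q - k * (Q - 1))"
    unfolding M1' M2' using Q by (simp add: field_simps power2_eq_square)
  finally show ?thesis
    using CARD_field_ge_2[where 'a='a] by (simp add: m_def V_def Q_def of_nat_diff)
qed

lemma sq_le_sq_diff_of_dvd:
  fixes k m :: nat
  assumes "k dvd m" "m \<noteq> k"
  shows "real k ^ 2 \<le> (real m - real k) ^ 2"
proof -
  obtain j where m: "m = k * j" using assms(1) by blast
  with assms(2) have "j = 0 \<or> j \<ge> 2" by auto
  then show ?thesis
  proof
    assume "j \<ge> 2"
    then have "2 * k \<le> m" by (simp add: m)
    then have "real k \<le> real m - real k" by linarith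
    then show ?thesis by (intro power_mono) auto
  qed (simp add: m)
qed

lemma card_nonzero_forms_off_target_le:
  fixes S :: "('n::finite \<Rightarrow> 'a::{field,finite}) set set"
  assumes "S \<subseteq> proj_points" "divisible_set (CARD('a) ^ r) S" "card S = CARD('a) ^ (r + 1)"
  shows "real (card {a. a \<noteq> (\<lambda>i. 0) \<and> pts_in S {x. dot a x = 0} \<noteq> CARD('a) ^ r})
       \<le> (real CARD('a) - 1) * (real CARD('a) powi (int CARD('n) - int r - 1) - real CARD('a) + 1)"
proof -
  define Q where "Q = real CARD('a)"
  define k where "k = CARD('a) ^ r"
  define m where "m a = pts_in S {x. dot a x = 0}" for a :: "'n \<Rightarrow> 'a"
  define B where "B = {a. a \<noteq> (\<lambda>i. 0) \<and> m a \<noteq> k}"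
  have Q: "Q \<ge> 2" using CARD_field_ge_2 by (simp add: Q_def)
  have k: "real k = Q ^ r" by (simp add: k_def Q_def)
  have dev: "real k ^ 2 \<le> (real (m a) - real k) ^ 2" if "a \<in> B" for a
  proof (rule sq_le_sq_diff_of_dvd)
    have "{x. dot a x = 0} \<in> proj_hyperplanes"
      using that unfolding B_def proj_hyperplanes_def dot_def by blast
    with assms(2,3) show "k dvd m a"
      by (simp add: divisible_set_def m_def k_def mod_eq_0_iff_dvd)
  qed (use that B_def in auto)
  have "real (card B) * real k ^ 2 = (\<Sum>a\<in>B. real k ^ 2)" by simp
  also have "\<dots> \<le> (\<Sum>a\<in>B. (real (m a) - real k) ^ 2)" using dev by (rule sum_mono)
  also have "\<dots> \<le> (\<Sum>a\<in>UNIV - {\<lambda>i. 0}. (real (m a) - real k) ^ 2)"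
    by (rule sum_mono2) (auto simp: B_def)
  also have "\<dots> = real k * (Q - 1) * (Q ^ CARD('n) / Q - real k * (Q - 1))"
    using sum_sq_deviation_nonzero_forms[OF assms(1), of k] assms(3)
    by (simp add: m_def Q_def k_def)
  finally have "real (card B) * real k \<le> (Q - 1) * (Q ^ CARD('n) / Q - real k * (Q - 1))"
    using Q by (simp add: k power2_eq_square mult_ac)
  then have "real (card B) \<le> (Q - 1) * (Q ^ CARD('n) / (Q * real k) - Q + 1)"
    using Q by (simp add: k field_simps)
  moreover have "Q powi (int CARD('n) - int r - 1) = Q ^ CARD('n) / (Q * real k)"
    using Q by (simp add: k power_int_diff mult.commute)
  ultimately show ?thesis by (simp add: B_def m_def k_def Q_def)
qed

theorem mainTheorem2:
  fixes S :: "('n::finite \<Rightarrow> 'a::{field,finite}) set set" and r :: nat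
  assumes "r \<ge> 1"
    and "S \<subseteq> proj_points"
    and "spanning_set S"
    and "divisible_set (card (UNIV::'a set) ^ r) S"
    and "card S = card (UNIV::'a set) ^ (r + 1)"
  shows "real (card {H\<in>proj_hyperplanes. pts_in S H = card (UNIV::'a set) ^ r})
         \<ge> (real (card (UNIV::'a set)) ^ card (UNIV::'n set) - 1) / (real (card (UNIV::'a set)) - 1)
           - (real (card (UNIV::'a set)) powi (int (card (UNIV::'n set)) - int r - 1) - real (card (UNIV::'a set)) + 1)"
proof -
  define Q where "Q = real CARD('a)"
  define N where "N = real (card {H \<in> proj_hyperplanes. pts_in S H = CARD('a) ^ r})"
  define X where "X = Q powi (int CARD('n) - int r - 1) - Q + 1"
  have Q: "Q \<ge> 2" using CARD_field_ge_2 by (simp add: Q_def)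
  have "(Q - 1) * N \<ge> (Q ^ CARD('n) - 1) - (Q - 1) * X"
    using card_hyperplanes_by_complement[of "\<lambda>H. pts_in S H = CARD('a) ^ r"]
      card_nonzero_forms_off_target_le[OF assms(2,4,5)]
    by (simp add: Q_def N_def X_def)
  with Q have "N \<ge> (Q ^ CARD('n) - 1) / (Q - 1) - X"
    by (simp add: field_simps)
  then show ?thesis by (simp add: N_def Q_def X_def)
qed

end
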